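(* Any ensemble of pairwise orthogonal pure states in $\mathbb{C}^2\otimes\mathbb{C}^2$ (sampled with uniform probabilities) that contains no more than two entangled states is two-copy distinguishable under adaptive LOCC, i.e., the unknown state can be identified with certainty from two copies by an adaptive LOCC strategy.
   Context: Two spatially separated parties (Alice holding the first qubit, Bob the second) are given copies of an unknown state drawn from a known ensemble. In an adaptive LOCC strategy each copy is addressed individually by local quantum operations and classical communication (LOCC) acting on that copy only, and the strategy used on later copies may depend on the outcomes from earlier copies. A pure state is entangled if it is not a product state. *)

theory Defs
  imports Complex_Main
begin

text \<open>Two-qubit pure (unnormalised) vectors in C^2 (x) C^2: psi a b is the amplitude of
  the basis vector |a>|b>, a = Alice's index, b = Bob's index.
  Single-qubit linear operators are 2x2 complex matrices K r c.\<close>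

type_synonym state2 = "bool \<Rightarrow> bool \<Rightarrow> complex"
type_synonym qop = "bool \<Rightarrow> bool \<Rightarrow> complex"

definition inner2 :: "state2 \<Rightarrow> state2 \<Rightarrow> complex" where
  "inner2 \<phi> \<psi> = (\<Sum>a\<in>UNIV. \<Sum>b\<in>UNIV. cnj (\<phi> a b) * \<psi> a b)"

definition is_product :: "state2 \<Rightarrow> bool" where
  "is_product \<psi> \<longleftrightarrow> (\<exists>u v :: bool \<Rightarrow> complex. \<psi> = (\<lambda>a b. u a * v b))"

definition entangled :: "state2 \<Rightarrow> bool" where
  "entangled \<psi> \<longleftrightarrow> \<not> is_product \<psi>"

datatype party = Alice | Bob

definition apply_local :: "party \<Rightarrow> qop \<Rightarrow> state2 \<Rightarrow> state2" where
  "apply_local p K \<psi> = (case p of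
      Alice \<Rightarrow> (\<lambda>a b. \<Sum>a'\<in>UNIV. K a a' * \<psi> a' b)
    | Bob \<Rightarrow> (\<lambda>a b. \<Sum>b'\<in>UNIV. K b b' * \<psi> a b'))"

definition complete_meas :: "qop list \<Rightarrow> bool" where
  "complete_meas Ks \<longleftrightarrow> (\<forall>r c. (\<Sum>K\<leftarrow>Ks. \<Sum>k\<in>UNIV. cnj (K k r) * K k c) = (if r = c then 1 else 0))"

text \<open>A finite-round LOCC protocol on one copy: a tree in which, at each node, one party
  performs a local measurement (outcome j with Kraus operator K_j), broadcasts the outcome,
  and the protocol continues with the subtree attached to that outcome.\<close>
datatype 'a prot = Leaf 'a | Node party "(qop \<times> 'a prot) list"

inductive valid_prot :: "('a \<Rightarrow> bool) \<Rightarrow> 'a prot \<Rightarrow> bool" for P where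
  leaf: "P x \<Longrightarrow> valid_prot P (Leaf x)"
| node: "complete_meas (map fst kts) \<Longrightarrow> list_all (\<lambda>kt. valid_prot P (snd kt)) kts
          \<Longrightarrow> valid_prot P (Node p kts)"

text \<open>reaches t psi x: starting from psi, the leaf with label x is reached with nonzero
  probability (the unnormalised post-measurement vector at that leaf is nonzero).\<close>
inductive reaches :: "'a prot \<Rightarrow> state2 \<Rightarrow> 'a \<Rightarrow> bool" where
  leaf: "\<psi> \<noteq> (\<lambda>_ _. 0) \<Longrightarrow> reaches (Leaf x) \<psi> x"
| node: "(K, t) \<in> set kts \<Longrightarrow> reaches t (apply_local p K \<psi>) x \<Longrightarrow> reaches (Node p kts) \<psi> x"

text \<open>Adaptive two-copy LOCC strategy: an LOCC protocol on copy 1 whose leaves are LOCC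
  protocols on copy 2, whose leaves are the guessed index.\<close>
definition valid_strategy2 :: "nat prot prot \<Rightarrow> bool" where
  "valid_strategy2 S \<longleftrightarrow> valid_prot (valid_prot (\<lambda>_. True)) S"

definition two_copy_distinguishable :: "nat \<Rightarrow> (nat \<Rightarrow> state2) \<Rightarrow> bool" where
  "two_copy_distinguishable n \<psi> \<longleftrightarrow>
     (\<exists>S. valid_strategy2 S \<and>
        (\<forall>i<n. \<forall>T g. reaches S (\<psi> i) T \<and> reaches T (\<psi> i) g \<longrightarrow> g = i))"

end

theory Submission
  imports Defs
begin

text \<open>Two orthogonal two-qubit states can be told apart perfectly on a single copy
  (Walgate, Short, Hardy and Vedral): Alice measures in a basis \<open>{w, w\<^sup>\<bottom>}\<close> for which Bob's
  conditional states stay orthogonal, and Bob then separates them.  Such a \<open>w\<close> exists because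
  the overlap matrix of the two states, traced over Bob, is traceless; hence its quadratic form
  has a unit zero \<open>w\<close>, and it then also vanishes at \<open>w\<^sup>\<bottom>\<close>.

  It therefore suffices to measure the first copy in a product basis each of whose outcomes
  leaves at most two candidate states.  If no state is a product, there are at most two states.
  If exactly one state \<open>u \<otimes> v\<close> is a product, there are at most three, and the basis
  \<open>u \<otimes> v, u \<otimes> v\<^sup>\<bottom>, u\<^sup>\<bottom> \<otimes> v, u\<^sup>\<bottom> \<otimes> v\<^sup>\<bottom>\<close> works.  If two states \<open>u \<otimes> v\<close> and \<open>u' \<otimes> v'\<close>
  are products, their orthogonality gives, say, \<open>u' \<sim> u\<^sup>\<bottom>\<close>; in the basis
  \<open>u \<otimes> v, u \<otimes> v\<^sup>\<bottom>, u\<^sup>\<bottom> \<otimes> v', u\<^sup>\<bottom> \<otimes> v'\<^sup>\<bottom>\<close> the first and third vectors single out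
  the two product states, and all remaining states lie in the plane spanned by the other two
  vectors, so there are at most two of them.\<close>

section \<open>Single-qubit vectors\<close>

definition inner1 :: "(bool \<Rightarrow> complex) \<Rightarrow> (bool \<Rightarrow> complex) \<Rightarrow> complex" where
  "inner1 x y = (\<Sum>k\<in>UNIV. cnj (x k) * y k)"

definition perp :: "(bool \<Rightarrow> complex) \<Rightarrow> bool \<Rightarrow> complex" where
  "perp x = (\<lambda>k. if k then cnj (x False) else - cnj (x True))"

definition proj :: "(bool \<Rightarrow> complex) \<Rightarrow> qop" where
  "proj w = (\<lambda>r c. w r * cnj (w c))"

lemma inner1_expand: "inner1 x y = cnj (x False) * y False + cnj (x True) * y True"
  by (simp add: inner1_def UNIV_bool)

lemma inner1_scale_left: "inner1 (\<lambda>k. c * x k) y = cnj c * inner1 x y"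
  and inner1_scale_right: "inner1 x (\<lambda>k. c * y k) = c * inner1 x y"
  and inner1_zero_right: "inner1 x (\<lambda>_. 0) = 0"
  and inner1_perp_left: "inner1 (perp x) x = 0"
  and inner1_perp_perp: "inner1 (perp x) (perp x) = inner1 x x"
  by (simp_all add: inner1_expand perp_def algebra_simps)

lemma perp_scale: "perp (\<lambda>k. c * x k) = (\<lambda>k. cnj c * perp x k)"
  by (auto simp: perp_def)

lemma inner1_self: "inner1 x x = of_real ((cmod (x False))\<^sup>2 + (cmod (x True))\<^sup>2)"
  unfolding inner1_expand of_real_add complex_norm_square by (simp add: mult.commute)

lemma inner1_self_eq_0_iff: "inner1 x x = 0 \<longleftrightarrow> x = (\<lambda>_. 0)"
proof
  assume "inner1 x x = 0"
  then have "(cmod (x False))\<^sup>2 + (cmod (x True))\<^sup>2 = 0"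
    unfolding inner1_self of_real_eq_0_iff .
  then show "x = (\<lambda>_. 0)"
    by (auto simp: add_nonneg_eq_0_iff all_bool_eq fun_eq_iff)
qed (simp add: inner1_zero_right)

lemma normalize_qubit:
  assumes "x \<noteq> (\<lambda>_. 0)"
  obtains c where "c \<noteq> 0" "inner1 (\<lambda>k. c * x k) (\<lambda>k. c * x k) = 1"
proof -
  define t where "t = (cmod (x False))\<^sup>2 + (cmod (x True))\<^sup>2"
  have "t \<noteq> 0"
    using assms inner1_self_eq_0_iff unfolding inner1_self t_def by force
  then have "t > 0"
    unfolding t_def by (simp add: add_nonneg_eq_0_iff order_neq_le_trans)
  define c where "c = complex_of_real (1 / sqrt t)"
  have "inner1 (\<lambda>k. c * x k) (\<lambda>k. c * x k) = cnj c * c * of_real t"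
    by (simp add: inner1_scale_left inner1_scale_right inner1_self t_def)
  also have "\<dots> = 1"
    unfolding c_def using \<open>t > 0\<close> by (simp flip: of_real_mult)
  moreover have "c \<noteq> 0"
    unfolding c_def using \<open>t > 0\<close> by simp
  ultimately show thesis
    using that by simp
qed

lemma qubit_expansion:
  assumes "inner1 u u = 1"
  shows "x = (\<lambda>k. inner1 u x * u k + inner1 (perp u) x * perp u k)"
proof
  fix k
  have "cnj (u False) * u False + cnj (u True) * u True = 1"
    using assms by (simp add: inner1_expand)
  then show "x k = inner1 u x * u k + inner1 (perp u) x * perp u k"
    by (cases k) (simp_all add: inner1_expand perp_def algebra_simps; algebra)+
qed

lemma no_three_orthonormal_qubits:
  assumes "inner1 a a = 1" "inner1 b b = 1" "inner1 c c = 1"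
    and "inner1 a b = 0" "inner1 a c = 0" "inner1 b c = 0"
  shows False
proof -
  have perp_a: "inner1 (perp a) (perp a) = 1"
    using assms(1) by (simp add: inner1_perp_perp)
  have b: "b = (\<lambda>k. inner1 (perp a) b * perp a k)"
    using qubit_expansion[OF assms(1), of b] assms(4) by simp
  have c: "c = (\<lambda>k. inner1 (perp a) c * perp a k)"
    using qubit_expansion[OF assms(1), of c] assms(5) by simp
  have "inner1 b b = cnj (inner1 (perp a) b) * inner1 (perp a) b"
    by (subst (1 2) b) (simp add: inner1_scale_left inner1_scale_right perp_a)
  then have "inner1 (perp a) b \<noteq> 0"
    using assms(2) by auto
  moreover have "inner1 b c = cnj (inner1 (perp a) b) * inner1 (perp a) c"
    by (subst b, subst c) (simp add: inner1_scale_left inner1_scale_right perp_a)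
  ultimately have "c = (\<lambda>_. 0)"
    using assms(6) c by simp
  then show False
    using assms(3) by (simp add: inner1_zero_right)
qed

lemma exists_unit_separating_qubit:
  assumes "inner1 x y = 0"
  shows "\<exists>f. inner1 f f = 1 \<and> inner1 f y = 0 \<and> inner1 (perp f) x = 0"
proof (cases "x = (\<lambda>_. 0)")
  case False
  then obtain c where "inner1 (\<lambda>k. c * x k) (\<lambda>k. c * x k) = 1"
    by (rule normalize_qubit)
  then show ?thesis
    by (intro exI[of _ "\<lambda>k. c * x k"])
       (simp add: inner1_scale_left perp_scale assms inner1_perp_left)
next
  case x: True
  show ?thesis
  proof (cases "y = (\<lambda>_. 0)")
    case False
    then have "perp y \<noteq> (\<lambda>_. 0)"
      by (metis inner1_perp_perp inner1_self_eq_0_iff)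
    then obtain c where "inner1 (\<lambda>k. c * perp y k) (\<lambda>k. c * perp y k) = 1"
      by (rule normalize_qubit)
    then show ?thesis
      by (intro exI[of _ "\<lambda>k. c * perp y k"])
         (simp add: x inner1_scale_left inner1_perp_left inner1_zero_right)
  next
    case True
    then show ?thesis
      by (intro exI[of _ "\<lambda>k. if k then 0 else 1"]) (simp add: x inner1_expand)
  qed
qed

section \<open>Product states and partial inner products\<close>

fun other :: "party \<Rightarrow> party" where
  "other Alice = Bob"
| "other Bob = Alice"

definition prod_state :: "party \<Rightarrow> (bool \<Rightarrow> complex) \<Rightarrow> (bool \<Rightarrow> complex) \<Rightarrow> state2" where
  "prod_state p w f = (case p of Alice \<Rightarrow> (\<lambda>a b. w a * f b) | Bob \<Rightarrow> (\<lambda>a b. f a * w b))"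

definition partial_inner :: "party \<Rightarrow> (bool \<Rightarrow> complex) \<Rightarrow> state2 \<Rightarrow> bool \<Rightarrow> complex" where
  "partial_inner p w x = (case p of
      Alice \<Rightarrow> (\<lambda>b. \<Sum>a\<in>UNIV. cnj (w a) * x a b)
    | Bob \<Rightarrow> (\<lambda>a. \<Sum>b\<in>UNIV. cnj (w b) * x a b))"

lemma inner2_expand:
  "inner2 x y = cnj (x False False) * y False False + cnj (x False True) * y False True
     + cnj (x True False) * y True False + cnj (x True True) * y True True"
  by (simp add: inner2_def UNIV_bool)

lemma inner2_cnj: "inner2 x y = cnj (inner2 y x)"
  by (simp add: inner2_expand)

lemma inner2_scale_left: "inner2 (\<lambda>a b. c * x a b) y = cnj c * inner2 x y"
  by (simp add: inner2_expand algebra_simps)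

lemma inner2_lincomb_right:
  "inner2 x (\<lambda>a b. \<alpha> * y a b + \<beta> * z a b) = \<alpha> * inner2 x y + \<beta> * inner2 x z"
  by (simp add: inner2_expand algebra_simps)

lemma inner2_prod_state: "inner2 (prod_state p a b) (prod_state p c d) = inner1 a c * inner1 b d"
  by (cases p) (simp_all add: inner2_expand inner1_expand prod_state_def algebra_simps)

lemma inner2_prod_state_left: "inner2 (prod_state p w f) x = inner1 f (partial_inner p w x)"
  by (cases p) (simp_all add: inner2_expand inner1_expand prod_state_def partial_inner_def
      UNIV_bool algebra_simps)

lemma prod_state_scale_left: "prod_state p (\<lambda>k. c * w k) f = (\<lambda>a b. c * prod_state p w f a b)"
  by (cases p) (auto simp: prod_state_def algebra_simps)

lemma prod_state_lincomb_right:
  "prod_state p w (\<lambda>k. \<alpha> * f k + \<beta> * g k) = (\<lambda>a b. \<alpha> * prod_state p w f a b + \<beta> * prod_state p w g a b)"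
  by (cases p) (auto simp: prod_state_def algebra_simps)

lemma prod_state_Alice_Bob: "prod_state Alice u v = prod_state Bob v u"
  by (simp add: prod_state_def)

lemma product_state_unit_factors:
  assumes "\<not> entangled \<psi>" "inner2 \<psi> \<psi> = 1"
  obtains u v where "inner1 u u = 1" "inner1 v v = 1" "\<psi> = prod_state Alice u v"
proof -
  obtain u v where \<psi>: "\<psi> = prod_state Alice u v"
    using assms(1) unfolding entangled_def is_product_def prod_state_def by auto
  then have uv: "inner1 u u * inner1 v v = 1"
    using assms(2) by (simp add: inner2_prod_state)
  then have "u \<noteq> (\<lambda>_. 0)"
    by (auto simp: inner1_zero_right)
  then obtain c where "c \<noteq> 0" and cu: "inner1 (\<lambda>k. c * u k) (\<lambda>k. c * u k) = 1"
    by (rule normalize_qubit)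
  then have "inverse (cnj c * c) = inner1 u u"
    by (intro inverse_unique) (simp add: inner1_scale_left inner1_scale_right mult.assoc)
  moreover have "inner1 (\<lambda>k. inverse c * v k) (\<lambda>k. inverse c * v k) = inverse (cnj c * c) * inner1 v v"
    by (simp add: inner1_scale_left inner1_scale_right inverse_mult_distrib mult.assoc)
  ultimately have "inner1 (\<lambda>k. inverse c * v k) (\<lambda>k. inverse c * v k) = 1"
    using uv by simp
  moreover have "\<psi> = prod_state Alice (\<lambda>k. c * u k) (\<lambda>k. inverse c * v k)"
    using \<psi> \<open>c \<noteq> 0\<close> by (simp add: prod_state_def fun_eq_iff)
  ultimately show thesis
    using that cu by blast
qed

lemma partial_inner_expansion:
  assumes "inner1 u u = 1"
  shows "x = (\<lambda>a b. prod_state p u (partial_inner p u x) a b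
                  + prod_state p (perp u) (partial_inner p (perp u) x) a b)"
proof (intro ext)
  fix a b
  have "x a b = inner1 u (\<lambda>a. x a b) * u a + inner1 (perp u) (\<lambda>a. x a b) * perp u a"
   and "x a b = inner1 u (x a) * u b + inner1 (perp u) (x a) * perp u b"
    using fun_cong[OF qubit_expansion[OF assms, of "\<lambda>a. x a b"], of a]
      fun_cong[OF qubit_expansion[OF assms, of "x a"], of b] by simp_all
  then show "x a b = prod_state p u (partial_inner p u x) a b
                  + prod_state p (perp u) (partial_inner p (perp u) x) a b"
    by (cases p) (simp_all add: prod_state_def partial_inner_def inner1_def mult.commute)
qed

lemma product_basis_expansion:
  assumes "inner1 u u = 1" "inner1 v v = 1" "inner1 v' v' = 1"
  shows "x = (\<lambda>a b. inner2 (prod_state p u v) x * prod_state p u v a b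
              + inner2 (prod_state p u (perp v)) x * prod_state p u (perp v) a b
              + inner2 (prod_state p (perp u) v') x * prod_state p (perp u) v' a b
              + inner2 (prod_state p (perp u) (perp v')) x * prod_state p (perp u) (perp v') a b)"
proof -
  let ?x1 = "partial_inner p u x" and ?x2 = "partial_inner p (perp u) x"
  have "x = (\<lambda>a b. prod_state p u ?x1 a b + prod_state p (perp u) ?x2 a b)"
    by (rule partial_inner_expansion[OF assms(1)])
  also have "\<dots> = (\<lambda>a b.
        prod_state p u (\<lambda>k. inner1 v ?x1 * v k + inner1 (perp v) ?x1 * perp v k) a b
      + prod_state p (perp u) (\<lambda>k. inner1 v' ?x2 * v' k + inner1 (perp v') ?x2 * perp v' k) a b)"
    using qubit_expansion[OF assms(2), of ?x1] qubit_expansion[OF assms(3), of ?x2] by simp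
  also have "\<dots> = (\<lambda>a b. inner2 (prod_state p u v) x * prod_state p u v a b
              + inner2 (prod_state p u (perp v)) x * prod_state p u (perp v) a b
              + inner2 (prod_state p (perp u) v') x * prod_state p (perp u) v' a b
              + inner2 (prod_state p (perp u) (perp v')) x * prod_state p (perp u) (perp v') a b)"
    unfolding prod_state_lincomb_right inner2_prod_state_left by (simp add: algebra_simps)
  finally show ?thesis .
qed

lemma card_orthonormal_in_product_plane_le_two:
  fixes \<psi> :: "nat \<Rightarrow> state2"
  assumes normalized: "\<forall>i<n. inner2 (\<psi> i) (\<psi> i) = 1"
    and orthogonal: "\<forall>i<n. \<forall>j<n. i \<noteq> j \<longrightarrow> inner2 (\<psi> i) (\<psi> j) = 0"
    and unit: "inner1 u u = 1" "inner1 v v = 1" "inner1 v' v' = 1"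
    and R: "R \<subseteq> {..<n}"
    and orth_R: "\<forall>j\<in>R. inner2 (prod_state p u v) (\<psi> j) = 0
                     \<and> inner2 (prod_state p (perp u) v') (\<psi> j) = 0"
  shows "card R \<le> 2"
proof (rule ccontr)
  assume "\<not> card R \<le> 2"
  then have "3 \<le> card R"
    by simp
  then obtain S where "S \<subseteq> R" "card S = 3"
    by (rule obtain_subset_with_card_n)
  then obtain i j k where ijk: "i \<in> R" "j \<in> R" "k \<in> R" "i \<noteq> j" "j \<noteq> k" "i \<noteq> k"
    by (auto simp: card_3_iff)
  let ?e1 = "prod_state p u (perp v)" and ?e2 = "prod_state p (perp u) (perp v')"
  define coords where "coords l = (\<lambda>k. if k then inner2 ?e2 (\<psi> l) else inner2 ?e1 (\<psi> l))" for l
  have inner2_coords: "inner2 (\<psi> l) (\<psi> m) = inner1 (coords l) (coords m)"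
    if "l \<in> R" "m \<in> R" for l m
  proof -
    have "\<psi> m = (\<lambda>a b. inner2 ?e1 (\<psi> m) * ?e1 a b + inner2 ?e2 (\<psi> m) * ?e2 a b)"
      using product_basis_expansion[OF unit, of "\<psi> m" p] orth_R that(2) by simp
    from arg_cong[OF this, of "inner2 (\<psi> l)"] have "inner2 (\<psi> l) (\<psi> m)
        = inner2 ?e1 (\<psi> m) * cnj (inner2 ?e1 (\<psi> l)) + inner2 ?e2 (\<psi> m) * cnj (inner2 ?e2 (\<psi> l))"
      unfolding inner2_lincomb_right by (simp add: inner2_cnj[of "\<psi> l"])
    then show ?thesis
      by (simp add: coords_def inner1_expand mult.commute)
  qed
  have "i < n" "j < n" "k < n"
    using R ijk by auto
  then show False
    by (intro no_three_orthonormal_qubits[of "coords i" "coords j" "coords k"])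
       (simp_all flip: inner2_coords add: ijk normalized orthogonal)
qed

section \<open>Measuring in a product basis\<close>

definition product_basis_prot :: "party \<Rightarrow> (bool \<Rightarrow> complex) \<Rightarrow> (bool \<Rightarrow> complex)
    \<Rightarrow> (bool \<Rightarrow> complex) \<Rightarrow> 'a \<Rightarrow> 'a \<Rightarrow> 'a \<Rightarrow> 'a \<Rightarrow> 'a prot" where
  "product_basis_prot p w f1 f2 l11 l12 l21 l22 = Node p
     [(proj w, Node (other p) [(proj f1, Leaf l11), (proj (perp f1), Leaf l12)]),
      (proj (perp w), Node (other p) [(proj f2, Leaf l21), (proj (perp f2), Leaf l22)])]"

lemma complete_meas_proj_perp:
  assumes "inner1 w w = 1"
  shows "complete_meas [proj w, proj (perp w)]"
  unfolding complete_meas_def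
proof (intro allI)
  fix r c
  have "cnj (w False) * w False + cnj (w True) * w True = 1"
    using assms by (simp add: inner1_expand)
  then show "(\<Sum>K\<leftarrow>[proj w, proj (perp w)]. \<Sum>k\<in>UNIV. cnj (K k r) * K k c) = (if r = c then 1 else 0)"
    by (cases r; cases c; simp add: UNIV_bool proj_def perp_def algebra_simps) algebra+
qed

lemma valid_product_basis_prot:
  assumes "inner1 w w = 1" "inner1 f1 f1 = 1" "inner1 f2 f2 = 1"
    and "P l11" "P l12" "P l21" "P l22"
  shows "valid_prot P (product_basis_prot p w f1 f2 l11 l12 l21 l22)"
  unfolding product_basis_prot_def
  by (auto intro!: valid_prot.intros complete_meas_proj_perp simp: assms)

lemma reaches_Leaf_iff: "reaches (Leaf y) \<psi> x \<longleftrightarrow> x = y \<and> \<psi> \<noteq> (\<lambda>_ _. 0)"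
  by (auto elim: reaches.cases intro: reaches.intros)

lemma reaches_Node_iff:
  "reaches (Node p kts) \<psi> x \<longleftrightarrow> (\<exists>(K, t)\<in>set kts. reaches t (apply_local p K \<psi>) x)"
  by (auto elim: reaches.cases intro: reaches.intros)

lemma apply_local_proj_proj:
  "apply_local (other p) (proj f) (apply_local p (proj w) \<psi>)
     = (\<lambda>a b. prod_state p w f a b * inner2 (prod_state p w f) \<psi>)"
  by (cases p) (auto simp: apply_local_def proj_def prod_state_def inner2_expand UNIV_bool
      algebra_simps fun_eq_iff)

lemma reaches_product_basis_prot:
  assumes "reaches (product_basis_prot p w f1 f2 l11 l12 l21 l22) \<psi> x"
  shows "inner2 (prod_state p w f1) \<psi> \<noteq> 0 \<and> x = l11
       \<or> inner2 (prod_state p w (perp f1)) \<psi> \<noteq> 0 \<and> x = l12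
       \<or> inner2 (prod_state p (perp w) f2) \<psi> \<noteq> 0 \<and> x = l21
       \<or> inner2 (prod_state p (perp w) (perp f2)) \<psi> \<noteq> 0 \<and> x = l22"
  using assms unfolding product_basis_prot_def
  by (auto simp: reaches_Node_iff reaches_Leaf_iff apply_local_proj_proj)

section \<open>Single-copy discrimination of two orthogonal states\<close>

lemma complex_real_dependent:
  fixes X Y Z :: complex
  obtains s1 s2 s3 :: real
  where "(s1, s2, s3) \<noteq> (0, 0, 0)" "of_real s1 * X + of_real s2 * Y + of_real s3 * Z = 0"
proof -
  \<comment> \<open>\<open>Im (cnj a * b)\<close> is the cross product of \<open>a, b\<close> as vectors of the real plane.\<close>
  have cramer: "of_real (Im (cnj Y * Z)) * X + of_real (Im (cnj Z * X)) * Y + of_real (Im (cnj X * Y)) * Z = 0"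
    by (simp add: complex_eq_iff algebra_simps)
  show thesis
  proof (cases "(Im (cnj Y * Z), Im (cnj Z * X), Im (cnj X * Y)) = (0, 0, 0)")
    case False
    then show thesis
      using cramer by (rule that)
  next
    case True
    show thesis
    proof (cases "X = 0")
      case True
      then show thesis
        by (intro that[of 1 0 0]) simp_all
    next
      case False
      have "Im (cnj X * Y) = 0"
        using \<open>(Im (cnj Y * Z), Im (cnj Z * X), Im (cnj X * Y)) = (0, 0, 0)\<close> by simp
      then have "of_real (Re (cnj X * Y)) * X + of_real (- Re (cnj X * X)) * Y + of_real 0 * Z = 0"
        by (simp add: complex_eq_iff algebra_simps)
      moreover have "0 < Re (cnj X * X)"
        using False by (simp add: complex_eq_iff sum_power2_gt_zero_iff flip: power2_eq_square)
      then have "(Re (cnj X * Y), - Re (cnj X * X), 0) \<noteq> (0, 0, 0)"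
        by (simp only: prod.inject neg_equal_0_iff_equal) auto
      ultimately show thesis
        using that by blast
    qed
  qed
qed

definition qform :: "qop \<Rightarrow> (bool \<Rightarrow> complex) \<Rightarrow> complex" where
  "qform M w = (\<Sum>a\<in>UNIV. \<Sum>a'\<in>UNIV. w a * cnj (w a') * M a a')"

lemma qform_expand:
  "qform M w = w False * cnj (w False) * M False False + w False * cnj (w True) * M False True
     + w True * cnj (w False) * M True False + w True * cnj (w True) * M True True"
  by (simp add: qform_def UNIV_bool)

lemma qform_scale: "qform M (\<lambda>k. c * w k) = c * cnj c * qform M w"
  by (simp add: qform_expand algebra_simps)

lemma qform_perp:
  assumes "M False False + M True True = 0"
  shows "qform M (perp w) = - qform M w"
proof -
  have "M True True = - M False False"
    using assms by (simp add: add_eq_0_iff)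
  then show ?thesis
    by (simp add: qform_expand perp_def algebra_simps)
qed

lemma traceless_qform_has_nonzero_root:
  assumes traceless: "M False False + M True True = 0"
  shows "\<exists>w. w \<noteq> (\<lambda>_. 0) \<and> qform M w = 0"
proof -
  let ?A = "M False False" and ?B = "M False True" and ?C = "M True False"
  obtain s1 s2 s3 :: real where s: "(s1, s2, s3) \<noteq> (0, 0, 0)"
    and dep: "of_real s1 * (?B + ?C) + of_real s2 * (\<i> * (?C - ?B)) + of_real s3 * (2 * ?A) = 0"
    by (rule complex_real_dependent)
  \<comment> \<open>On vectors with Bloch vector \<open>s\<close>, the form is real-linear in \<open>s\<close> with coefficients
    \<open>B + C\<close>, \<open>\<i> (C - B)\<close> and \<open>2 A\<close>; a vector with Bloch direction \<open>s\<close> is \<open>(r + s3, s1 + \<i> s2)\<close>.\<close>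
  define r where "r = sqrt (s1\<^sup>2 + s2\<^sup>2 + s3\<^sup>2)"
  have r2: "r\<^sup>2 = s1\<^sup>2 + s2\<^sup>2 + s3\<^sup>2"
    unfolding r_def by simp
  show ?thesis
  proof (cases "r + s3 = 0")
    case False
    define w where "w = (\<lambda>k. if k then of_real s1 + \<i> * of_real s2 else complex_of_real (r + s3))"
    have w_False: "w False = of_real (r + s3)" and w_True: "w True = of_real s1 + \<i> * of_real s2"
      by (simp_all add: w_def)
    have "w False \<noteq> 0"
      using False by (simp add: w_False del: of_real_add)
    have "(r + s3)\<^sup>2 - (s1\<^sup>2 + s2\<^sup>2) = 2 * (r + s3) * s3"
      using r2 by (simp add: power2_eq_square algebra_simps)
    then have norm_diff: "w False * cnj (w False) - w True * cnj (w True) = of_real (2 * (r + s3) * s3)"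
      unfolding w_False w_True by (simp add: complex_eq_iff power2_eq_square algebra_simps)
    have "M True True = - ?A"
      using traceless by (simp add: add_eq_0_iff)
    then have "qform M w = (w False * cnj (w False) - w True * cnj (w True)) * ?A
        + w False * cnj (w True) * ?B + w True * cnj (w False) * ?C"
      by (simp add: qform_expand algebra_simps)
    also have "\<dots> = of_real (2 * (r + s3) * s3) * ?A
        + of_real (r + s3) * ((of_real s1 - \<i> * of_real s2) * ?B + (of_real s1 + \<i> * of_real s2) * ?C)"
      unfolding norm_diff by (simp add: w_False w_True algebra_simps)
    also have "\<dots> = of_real (r + s3) *
        (of_real s1 * (?B + ?C) + of_real s2 * (\<i> * (?C - ?B)) + of_real s3 * (2 * ?A))"
      by (simp add: algebra_simps)
    finally have "qform M w = 0"
      using dep by simp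
    with \<open>w False \<noteq> 0\<close> show ?thesis
      by (metis (mono_tags))
  next
    case True
    then have "s1\<^sup>2 + s2\<^sup>2 = 0"
      using r2 by (simp add: add_eq_0_iff)
    then have "s1 = 0" "s2 = 0"
      by (simp_all add: sum_power2_eq_zero_iff)
    then have "?A = 0"
      using s dep by simp
    then have "M True True = 0"
      using traceless by simp
    then show ?thesis
      by (intro exI[where x="\<lambda>k. if k then 1 else 0"]) (auto simp: qform_expand fun_eq_iff)
  qed
qed

lemma traceless_qform_has_unit_root:
  assumes "M False False + M True True = 0"
  obtains w where "inner1 w w = 1" "qform M w = 0"
proof -
  obtain w where "w \<noteq> (\<lambda>_. 0)" "qform M w = 0"
    using traceless_qform_has_nonzero_root[of M, OF assms] by blast
  moreover obtain c where "inner1 (\<lambda>k. c * w k) (\<lambda>k. c * w k) = 1"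
    using normalize_qubit[OF \<open>w \<noteq> (\<lambda>_. 0)\<close>] by blast
  ultimately show thesis
    by (intro that[of "\<lambda>k. c * w k"]) (simp_all add: qform_scale)
qed

lemma inner1_partial_inner_Alice:
  "inner1 (partial_inner Alice w P) (partial_inner Alice w Q)
     = qform (\<lambda>a a'. \<Sum>b\<in>UNIV. cnj (P a b) * Q a' b) w"
  by (simp add: inner1_expand qform_expand partial_inner_def UNIV_bool algebra_simps)

lemma orthogonal_states_Alice_basis:
  assumes "inner2 P Q = 0"
  obtains w where "inner1 w w = 1"
    "inner1 (partial_inner Alice w P) (partial_inner Alice w Q) = 0"
    "inner1 (partial_inner Alice (perp w) P) (partial_inner Alice (perp w) Q) = 0"
proof -
  let ?M = "\<lambda>a a'. \<Sum>b\<in>UNIV. cnj (P a b) * Q a' b"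
  have traceless: "?M False False + ?M True True = 0"
    using assms by (simp add: inner2_expand UNIV_bool algebra_simps)
  obtain w where "inner1 w w = 1" "qform ?M w = 0"
    by (rule traceless_qform_has_unit_root[of ?M, OF traceless])
  then show thesis
    by (intro that[of w]) (simp_all add: inner1_partial_inner_Alice qform_perp[of ?M, OF traceless])
qed

lemma orthogonal_states_locc_distinguishable:
  assumes "inner2 \<phi>1 \<phi>2 = 0"
  shows "\<exists>T. valid_prot (\<lambda>_. True) T
           \<and> (\<forall>g. reaches T \<phi>1 g \<longrightarrow> g = i) \<and> (\<forall>g. reaches T \<phi>2 g \<longrightarrow> g = j)"
proof -
  obtain w where w: "inner1 w w = 1"
    "inner1 (partial_inner Alice w \<phi>1) (partial_inner Alice w \<phi>2) = 0"
    "inner1 (partial_inner Alice (perp w) \<phi>1) (partial_inner Alice (perp w) \<phi>2) = 0"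
    using orthogonal_states_Alice_basis[OF assms] by blast
  obtain f1 where f1: "inner1 f1 f1 = 1" "inner1 f1 (partial_inner Alice w \<phi>2) = 0"
      "inner1 (perp f1) (partial_inner Alice w \<phi>1) = 0"
    using exists_unit_separating_qubit[OF w(2)] by blast
  obtain f2 where f2: "inner1 f2 f2 = 1" "inner1 f2 (partial_inner Alice (perp w) \<phi>2) = 0"
      "inner1 (perp f2) (partial_inner Alice (perp w) \<phi>1) = 0"
    using exists_unit_separating_qubit[OF w(3)] by blast
  let ?T = "product_basis_prot Alice w f1 f2 i j i j"
  have "valid_prot (\<lambda>_. True) ?T"
    by (rule valid_product_basis_prot) (simp_all add: w f1 f2)
  moreover have "g = i" if "reaches ?T \<phi>1 g" for g
    using reaches_product_basis_prot[OF that] f1 f2 by (auto simp: inner2_prod_state_left)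
  moreover have "g = j" if "reaches ?T \<phi>2 g" for g
    using reaches_product_basis_prot[OF that] f1 f2 by (auto simp: inner2_prod_state_left)
  ultimately show ?thesis
    by blast
qed

lemma at_most_two_states_locc_distinguishable:
  fixes \<psi> :: "nat \<Rightarrow> state2"
  assumes orthogonal: "\<forall>i<n. \<forall>j<n. i \<noteq> j \<longrightarrow> inner2 (\<psi> i) (\<psi> j) = 0"
    and C: "C \<subseteq> {..<n}" "card C \<le> 2"
  shows "\<exists>T. valid_prot (\<lambda>_. True) T \<and> (\<forall>i\<in>C. \<forall>g. reaches T (\<psi> i) g \<longrightarrow> g = i)"
proof -
  have "finite C"
    using C(1) by (rule finite_subset) simp
  have "card C = 0 \<or> card C = 1 \<or> card C = 2"
    using C(2) by linarith
  then consider "C = {}" | "card C = 1" | "card C = 2"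
    using \<open>finite C\<close> by auto
  then show ?thesis
  proof cases
    case 1
    then show ?thesis
      by (simp add: exI[of _ "Leaf 0"] valid_prot.leaf)
  next
    case 2
    then obtain x where "C = {x}"
      by (rule card_1_singletonE)
    then show ?thesis
      by (simp add: exI[of _ "Leaf x"] valid_prot.leaf reaches_Leaf_iff)
  next
    case 3
    then obtain x y where xy: "C = {x, y}" "x \<noteq> y"
      by (meson card_2_iff)
    then have "inner2 (\<psi> x) (\<psi> y) = 0"
      using orthogonal C(1) by blast
    from orthogonal_states_locc_distinguishable[OF this, of x y]
    obtain T where "valid_prot (\<lambda>_. True) T"
        "\<forall>g. reaches T (\<psi> x) g \<longrightarrow> g = x" "\<forall>g. reaches T (\<psi> y) g \<longrightarrow> g = y"
      by blast
    with xy show ?thesis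
      by blast
  qed
qed

section \<open>Two-copy discrimination\<close>

definition candidates :: "nat \<Rightarrow> (nat \<Rightarrow> state2) \<Rightarrow> state2 \<Rightarrow> nat set" where
  "candidates n \<psi> e = {j. j < n \<and> inner2 e (\<psi> j) \<noteq> 0}"

lemma candidates_subset_lessThan: "candidates n \<psi> e \<subseteq> {..<n}"
  by (auto simp: candidates_def)

lemma candidates_of_member:
  assumes orthogonal: "\<forall>i<n. \<forall>j<n. i \<noteq> j \<longrightarrow> inner2 (\<psi> i) (\<psi> j) = 0"
    and "i < n" "\<psi> i = (\<lambda>a b. c * e a b)" "c \<noteq> 0"
  shows "candidates n \<psi> e \<subseteq> {i}"
proof
  fix j
  assume j: "j \<in> candidates n \<psi> e"
  show "j \<in> {i}"
  proof (rule ccontr)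
    assume "j \<notin> {i}"
    then have "inner2 (\<psi> i) (\<psi> j) = 0"
      using orthogonal assms(2) j by (auto simp: candidates_def)
    then have "cnj c * inner2 e (\<psi> j) = 0"
      by (simp add: assms(3) inner2_scale_left)
    then show False
      using j assms(4) by (simp add: candidates_def)
  qed
qed

lemma card_candidates_of_member:
  assumes "\<forall>i<n. \<forall>j<n. i \<noteq> j \<longrightarrow> inner2 (\<psi> i) (\<psi> j) = 0"
    and "i < n" "\<psi> i = (\<lambda>a b. c * e a b)" "c \<noteq> 0"
  shows "card (candidates n \<psi> e) \<le> 2"
  using card_mono[OF _ candidates_of_member[OF assms]] by simp

lemma two_copy_distinguishable_by_product_basis:
  assumes orthogonal: "\<forall>i<n. \<forall>j<n. i \<noteq> j \<longrightarrow> inner2 (\<psi> i) (\<psi> j) = 0"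
    and unit: "inner1 w w = 1" "inner1 f1 f1 = 1" "inner1 f2 f2 = 1"
    and few_candidates: "\<forall>e\<in>{prod_state p w f1, prod_state p w (perp f1),
                               prod_state p (perp w) f2, prod_state p (perp w) (perp f2)}.
                            card (candidates n \<psi> e) \<le> 2"
  shows "two_copy_distinguishable n \<psi>"
proof -
  have "\<forall>e\<in>{prod_state p w f1, prod_state p w (perp f1),
             prod_state p (perp w) f2, prod_state p (perp w) (perp f2)}.
          \<exists>T. valid_prot (\<lambda>_. True) T
              \<and> (\<forall>i\<in>candidates n \<psi> e. \<forall>g. reaches T (\<psi> i) g \<longrightarrow> g = i)"
    using few_candidates at_most_two_states_locc_distinguishable[OF orthogonal candidates_subset_lessThan]
    by blast
  from bchoice[OF this] obtain T where T: "\<forall>e\<in>{prod_state p w f1, prod_state p w (perp f1),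
             prod_state p (perp w) f2, prod_state p (perp w) (perp f2)}.
          valid_prot (\<lambda>_. True) (T e)
          \<and> (\<forall>i\<in>candidates n \<psi> e. \<forall>g. reaches (T e) (\<psi> i) g \<longrightarrow> g = i)"
    by blast
  let ?S = "product_basis_prot p w f1 f2 (T (prod_state p w f1)) (T (prod_state p w (perp f1)))
              (T (prod_state p (perp w) f2)) (T (prod_state p (perp w) (perp f2)))"
  have "valid_strategy2 ?S"
    unfolding valid_strategy2_def using T by (intro valid_product_basis_prot unit) simp_all
  moreover have "g = i" if "i < n" "reaches ?S (\<psi> i) T'" "reaches T' (\<psi> i) g" for i T' g
    using reaches_product_basis_prot[OF that(2)] T that(1,3) by (auto simp: candidates_def)
  ultimately show ?thesis
    unfolding two_copy_distinguishable_def by blast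
qed

lemma two_copy_distinguishable_le_two:
  assumes "\<forall>i<n. \<forall>j<n. i \<noteq> j \<longrightarrow> inner2 (\<psi> i) (\<psi> j) = 0" "n \<le> 2"
  shows "two_copy_distinguishable n \<psi>"
proof -
  obtain T where "valid_prot (\<lambda>_. True) T" "\<forall>i<n. \<forall>g. reaches T (\<psi> i) g \<longrightarrow> g = i"
    using at_most_two_states_locc_distinguishable[OF assms(1), of "{..<n}"] assms(2) by auto
  then show ?thesis
    unfolding two_copy_distinguishable_def valid_strategy2_def
    by (intro exI[of _ "Leaf T"]) (simp add: valid_prot.leaf reaches_Leaf_iff)
qed

lemma two_copy_distinguishable_le_three_with_product:
  assumes normalized: "\<forall>i<n. inner2 (\<psi> i) (\<psi> i) = 1"
    and orthogonal: "\<forall>i<n. \<forall>j<n. i \<noteq> j \<longrightarrow> inner2 (\<psi> i) (\<psi> j) = 0"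
    and "n \<le> 3" "i < n" "\<not> entangled (\<psi> i)"
  shows "two_copy_distinguishable n \<psi>"
proof -
  have "inner2 (\<psi> i) (\<psi> i) = 1"
    using normalized \<open>i < n\<close> by blast
  with \<open>\<not> entangled (\<psi> i)\<close> obtain u v where unit: "inner1 u u = 1" "inner1 v v = 1"
    and \<psi>_i: "\<psi> i = prod_state Alice u v"
    by (rule product_state_unit_factors)
  have "card ({..<n} - {i}) \<le> 2"
    using \<open>n \<le> 3\<close> \<open>i < n\<close> by simp
  then have card_others: "card (candidates n \<psi> e) \<le> 2" if "inner2 e (\<psi> i) = 0" for e
    by (rule order_trans[rotated], intro card_mono) (use that in \<open>auto simp: candidates_def\<close>)
  have "inner2 (prod_state Alice u (perp v)) (\<psi> i) = 0"
    and "inner2 (prod_state Alice (perp u) v) (\<psi> i) = 0"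
    and "inner2 (prod_state Alice (perp u) (perp v)) (\<psi> i) = 0"
    by (simp_all add: \<psi>_i inner2_prod_state inner1_perp_left)
  moreover have "card (candidates n \<psi> (prod_state Alice u v)) \<le> 2"
    using card_candidates_of_member[OF orthogonal \<open>i < n\<close>, where c=1] \<psi>_i by simp
  ultimately show ?thesis
    using card_others by (intro two_copy_distinguishable_by_product_basis[OF orthogonal unit unit(2)]) auto
qed

lemma two_copy_distinguishable_orthogonal_product_pair:
  assumes normalized: "\<forall>i<n. inner2 (\<psi> i) (\<psi> i) = 1"
    and orthogonal: "\<forall>i<n. \<forall>j<n. i \<noteq> j \<longrightarrow> inner2 (\<psi> i) (\<psi> j) = 0"
    and ij: "i < n" "j < n" "i \<noteq> j"
    and \<psi>_i: "\<psi> i = prod_state p u v" and \<psi>_j: "\<psi> j = prod_state p u' v'"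
    and unit: "inner1 u u = 1" "inner1 v v = 1" "inner1 u' u' = 1" "inner1 v' v' = 1"
    and "inner1 u u' = 0"
  shows "two_copy_distinguishable n \<psi>"
proof -
  define c where "c = inner1 (perp u) u'"
  have u': "u' = (\<lambda>k. c * perp u k)"
    by (subst qubit_expansion[OF unit(1), of u']) (simp add: c_def \<open>inner1 u u' = 0\<close>)
  then have "c \<noteq> 0"
    using unit(3) by (auto simp: inner1_zero_right)
  have \<psi>_j': "\<psi> j = (\<lambda>a b. c * prod_state p (perp u) v' a b)"
    unfolding \<psi>_j u' by (rule prod_state_scale_left)
  have cand_i: "candidates n \<psi> (prod_state p u v) \<subseteq> {i}"
    using candidates_of_member[OF orthogonal ij(1), where c=1] \<psi>_i by simp
  have cand_j: "candidates n \<psi> (prod_state p (perp u) v') \<subseteq> {j}"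
    using candidates_of_member[OF orthogonal ij(2) \<psi>_j' \<open>c \<noteq> 0\<close>] .
  define R where "R = {k. k < n \<and> k \<noteq> i \<and> k \<noteq> j}"
  have "R \<subseteq> {..<n}"
    by (auto simp: R_def)
  moreover have "\<forall>k\<in>R. inner2 (prod_state p u v) (\<psi> k) = 0 \<and> inner2 (prod_state p (perp u) v') (\<psi> k) = 0"
    using cand_i cand_j unfolding R_def candidates_def by blast
  ultimately have "card R \<le> 2"
    by (rule card_orthonormal_in_product_plane_le_two[OF normalized orthogonal unit(1,2,4)])
  moreover have "finite R"
    by (simp add: R_def)
  ultimately have card_R: "card (candidates n \<psi> e) \<le> 2" if "candidates n \<psi> e \<subseteq> R" for e
    using card_mono[OF _ that] by linarith
  have "inner2 (prod_state p u (perp v)) (\<psi> i) = 0"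
    and "inner2 (prod_state p u (perp v)) (\<psi> j) = 0"
    and "inner2 (prod_state p (perp u) (perp v')) (\<psi> i) = 0"
    and "inner2 (prod_state p (perp u) (perp v')) (\<psi> j) = 0"
    unfolding \<psi>_i \<psi>_j using \<open>inner1 u u' = 0\<close>
    by (simp_all add: inner2_prod_state inner1_perp_left)
  then have "candidates n \<psi> (prod_state p u (perp v)) \<subseteq> R"
    and "candidates n \<psi> (prod_state p (perp u) (perp v')) \<subseteq> R"
    by (auto simp: R_def candidates_def)
  moreover have "card (candidates n \<psi> (prod_state p u v)) \<le> 2"
    and "card (candidates n \<psi> (prod_state p (perp u) v')) \<le> 2"
    using card_mono[OF _ cand_i] card_mono[OF _ cand_j] by simp_all
  ultimately show ?thesis
    using card_R by (intro two_copy_distinguishable_by_product_basis[OF orthogonal unit(1,2,4)]) auto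
qed

lemma two_copy_distinguishable_product_pair:
  assumes normalized: "\<forall>i<n. inner2 (\<psi> i) (\<psi> i) = 1"
    and orthogonal: "\<forall>i<n. \<forall>j<n. i \<noteq> j \<longrightarrow> inner2 (\<psi> i) (\<psi> j) = 0"
    and ij: "i < n" "j < n" "i \<noteq> j" "\<not> entangled (\<psi> i)" "\<not> entangled (\<psi> j)"
  shows "two_copy_distinguishable n \<psi>"
proof -
  have "inner2 (\<psi> i) (\<psi> i) = 1" "inner2 (\<psi> j) (\<psi> j) = 1"
    using normalized ij(1,2) by blast+
  then obtain u v u' v' where uv: "inner1 u u = 1" "inner1 v v = 1" "\<psi> i = prod_state Alice u v"
    and uv': "inner1 u' u' = 1" "inner1 v' v' = 1" "\<psi> j = prod_state Alice u' v'"
    using product_state_unit_factors[OF ij(4)] product_state_unit_factors[OF ij(5)] by metis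
  have "inner2 (\<psi> i) (\<psi> j) = 0"
    using orthogonal ij(1-3) by blast
  then have "inner1 u u' * inner1 v v' = 0"
    by (simp add: uv(3) uv'(3) inner2_prod_state)
  then consider "inner1 u u' = 0" | "inner1 v v' = 0"
    by auto
  then show ?thesis
  proof cases
    case 1
    with uv uv' show ?thesis
      by (intro two_copy_distinguishable_orthogonal_product_pair[OF normalized orthogonal ij(1-3)])
  next
    case 2
    with uv uv' show ?thesis
      unfolding prod_state_Alice_Bob
      by (intro two_copy_distinguishable_orthogonal_product_pair[OF normalized orthogonal ij(1-3)])
  qed
qed

theorem corollary1:
  fixes n :: nat and \<psi> :: "nat \<Rightarrow> state2"
  assumes normalized: "\<forall>i<n. inner2 (\<psi> i) (\<psi> i) = 1"
    and orthogonal: "\<forall>i<n. \<forall>j<n. i \<noteq> j \<longrightarrow> inner2 (\<psi> i) (\<psi> j) = 0"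
    and few_entangled: "card {i. i < n \<and> entangled (\<psi> i)} \<le> 2"
  shows "two_copy_distinguishable n \<psi>"
proof -
  let ?P = "{i. i < n \<and> \<not> entangled (\<psi> i)}" and ?E = "{i. i < n \<and> entangled (\<psi> i)}"
  have "?P \<union> ?E = {..<n}"
    by auto
  then have n: "n \<le> card ?P + 2"
    using card_Un_le[of ?P ?E] few_entangled by simp
  consider "card ?P = 0" | "card ?P = 1" | "2 \<le> card ?P"
    by linarith
  then show ?thesis
  proof cases
    case 1
    with n show ?thesis
      by (intro two_copy_distinguishable_le_two[OF orthogonal]) simp
  next
    case 2
    then obtain i where "?P = {i}"
      by (rule card_1_singletonE)
    moreover have "n \<le> 3"
      using 2 n by simp
    ultimately show ?thesis
      by (intro two_copy_distinguishable_le_three_with_product[OF normalized orthogonal]) auto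
  next
    case 3
    then obtain S where "S \<subseteq> ?P" "card S = 2"
      by (rule obtain_subset_with_card_n)
    moreover obtain i j where "S = {i, j}" "i \<noteq> j"
      using \<open>card S = 2\<close> by (meson card_2_iff)
    ultimately show ?thesis
      by (intro two_copy_distinguishable_product_pair[OF normalized orthogonal]) auto
  qed
qed

end
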